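(* In any execution of the algorithm described in the context on a camera object $S$ and an associated versioned CAS object $O$ (after $O$'s constructor has completed), once a VNode is in the version list of $O$, it remains in the version list forever.
   Context: Camera $S$ has an integer field timestamp, initially 0; takeSnapshot(): read $t:=S.\mathit{timestamp}$, perform CAS$(S.\mathit{timestamp},t,t+1)$, return $t$. A VNode has fields val and nextv (both immutable after creation) and ts (an integer or special value TBD, initially TBD). Versioned CAS object $O$ has a field $\mathit{VHead}$. Constructor with value $v$: $\mathit{VHead}:=$ new VNode(val $v$, nextv NULL); initTS($\mathit{VHead}$). initTS($n$): if $n.ts=$TBD, read $c:=S.\mathit{timestamp}$ and CAS$(n.ts,\mathrm{TBD},c)$. readSnapshot($ts$): $node:=\mathit{VHead}$; initTS($node$); while $node.ts>ts$, $node:=node.nextv$; return $node.val$. vRead(): $h:=\mathit{VHead}$; initTS($h$); return $h.val$. vCAS(oldV,newV): $h:=\mathit{VHead}$; initTS($h$); if $h.val\neq$ oldV return false; if newV $=$ oldV return true; $m:=$ new VNode(val newV, nextv $h$); if CAS$(\mathit{VHead},h,m)$ succeeds, initTS($m$) and return true; else delete $m$, call initTS on the current value of $\mathit{VHead}$, return false. The version list of $O$ is the list obtained by starting at the VNode pointed to by $\mathit{VHead}$ and following nextv pointers; its head is the VNode pointed to by $\mathit{VHead}$. *)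

theory Defs
  imports Main
begin

text \<open>VNodes are identified by addresses (nat).  Every line of the pseudocode that
  touches shared memory is one atomic step of one process.\<close>

type_synonym addr = nat

datatype 'v kont =
    KRS int            \<comment> \<open>readSnapshot(ts): continue with the while loop\<close>
  | KVR                \<comment> \<open>vRead: return h.val\<close>
  | KVC 'v 'v          \<comment> \<open>vCAS(oldV,newV): continue with the comparison\<close>
  | KVCfail            \<comment> \<open>vCAS failure path: return false\<close>
  | KDone              \<comment> \<open>vCAS success path: return true\<close>

datatype 'v lpc =
    Idle
  | TS_read | TS_cas int
  | IT_read addr "'v kont" | IT_readc addr "'v kont" | IT_cas addr int "'v kont"
  | RS_head int | RS_loop int addr | RS_next int addr | RS_ret addr
  | VR_head | VR_ret addr
  | VC_head 'v 'v | VC_check addr 'v 'v | VC_alloc addr 'v | VC_cas addr addr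
  | VC_del addr | VC_head2

record ('p, 'v) st =
  tstamp :: int
  used   :: "addr set"           \<comment> \<open>addresses ever allocated\<close>
  alloc  :: "addr set"           \<comment> \<open>addresses allocated and not deleted\<close>
  nval   :: "addr \<Rightarrow> 'v"
  nnext  :: "addr \<Rightarrow> addr option" \<comment> \<open>None = NULL\<close>
  nts    :: "addr \<Rightarrow> int option"  \<comment> \<open>None = TBD\<close>
  vhead  :: addr
  pcs    :: "'p \<Rightarrow> 'v lpc"

fun kont_next :: "addr \<Rightarrow> 'v kont \<Rightarrow> 'v lpc" where
  "kont_next n (KRS t) = RS_loop t n"
| "kont_next n KVR = VR_ret n"
| "kont_next n (KVC ov nv) = VC_check n ov nv"
| "kont_next n KVCfail = Idle"
| "kont_next n KDone = Idle"

definition setpc :: "'p \<Rightarrow> 'v lpc \<Rightarrow> ('p,'v) st \<Rightarrow> ('p,'v) st" where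
  "setpc p c s = s\<lparr>pcs := (pcs s)(p := c)\<rparr>"

inductive pstep :: "'p \<Rightarrow> ('p,'v) st \<Rightarrow> ('p,'v) st \<Rightarrow> bool" where
  inv_ts: "pcs s p = Idle \<Longrightarrow> pstep p s (setpc p TS_read s)"
| inv_rs: "pcs s p = Idle \<Longrightarrow> pstep p s (setpc p (RS_head t) s)"
| inv_vr: "pcs s p = Idle \<Longrightarrow> pstep p s (setpc p VR_head s)"
| inv_vc: "pcs s p = Idle \<Longrightarrow> pstep p s (setpc p (VC_head ov nv) s)"
| ts_read: "pcs s p = TS_read \<Longrightarrow> pstep p s (setpc p (TS_cas (tstamp s)) s)"
| ts_cas: "pcs s p = TS_cas t \<Longrightarrow>
     pstep p s (setpc p Idle (if tstamp s = t then s\<lparr>tstamp := t + 1\<rparr> else s))"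
| it_read: "pcs s p = IT_read n k \<Longrightarrow>
     pstep p s (setpc p (if nts s n = None then IT_readc n k else kont_next n k) s)"
| it_readc: "pcs s p = IT_readc n k \<Longrightarrow> pstep p s (setpc p (IT_cas n (tstamp s) k) s)"
| it_cas: "pcs s p = IT_cas n c k \<Longrightarrow>
     pstep p s (setpc p (kont_next n k)
        (if nts s n = None then s\<lparr>nts := (nts s)(n := Some c)\<rparr> else s))"
| rs_head: "pcs s p = RS_head t \<Longrightarrow> pstep p s (setpc p (IT_read (vhead s) (KRS t)) s)"
| rs_loop: "pcs s p = RS_loop t n \<Longrightarrow>
     pstep p s (setpc p (if (\<exists>u. nts s n = Some u \<and> u > t) then RS_next t n else RS_ret n) s)"
| rs_next: "pcs s p = RS_next t n \<Longrightarrow> nnext s n = Some m \<Longrightarrow> pstep p s (setpc p (RS_loop t m) s)"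
| rs_ret: "pcs s p = RS_ret n \<Longrightarrow> pstep p s (setpc p Idle s)"
| vr_head: "pcs s p = VR_head \<Longrightarrow> pstep p s (setpc p (IT_read (vhead s) KVR) s)"
| vr_ret: "pcs s p = VR_ret n \<Longrightarrow> pstep p s (setpc p Idle s)"
| vc_head: "pcs s p = VC_head ov nv \<Longrightarrow> pstep p s (setpc p (IT_read (vhead s) (KVC ov nv)) s)"
| vc_check: "pcs s p = VC_check h ov nv \<Longrightarrow>
     pstep p s (setpc p (if nval s h \<noteq> ov then Idle else if nv = ov then Idle else VC_alloc h nv) s)"
| vc_alloc: "pcs s p = VC_alloc h nv \<Longrightarrow> m \<notin> used s \<Longrightarrow>
     pstep p s (setpc p (VC_cas h m)
        (s\<lparr>used := insert m (used s), alloc := insert m (alloc s),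
           nval := (nval s)(m := nv), nnext := (nnext s)(m := Some h),
           nts := (nts s)(m := None)\<rparr>))"
| vc_cas: "pcs s p = VC_cas h m \<Longrightarrow>
     pstep p s (if vhead s = h then setpc p (IT_read m KDone) (s\<lparr>vhead := m\<rparr>)
                else setpc p (VC_del m) s)"
| vc_del: "pcs s p = VC_del m \<Longrightarrow> pstep p s (setpc p VC_head2 (s\<lparr>alloc := alloc s - {m}\<rparr>))"
| vc_head2: "pcs s p = VC_head2 \<Longrightarrow> pstep p s (setpc p (IT_read (vhead s) KVCfail) s)"

definition step :: "('p,'v) st \<Rightarrow> ('p,'v) st \<Rightarrow> bool" where
  "step s s' \<longleftrightarrow> (\<exists>p. pstep p s s')"

text \<open>States right after O's constructor has completed: VHead points to a
  single allocated node with nextv NULL whose ts has been initialised; no process is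
  inside an operation on O (processes may be in the middle of takeSnapshot).\<close>
definition init_state :: "('p,'v) st \<Rightarrow> bool" where
  "init_state s \<longleftrightarrow> finite (used s) \<and> alloc s \<subseteq> used s \<and> vhead s \<in> alloc s
     \<and> nnext s (vhead s) = None \<and> nts s (vhead s) \<noteq> None
     \<and> (\<forall>p. pcs s p = Idle \<or> pcs s p = TS_read \<or> (\<exists>t. pcs s p = TS_cas t))"

definition in_vlist :: "('p,'v) st \<Rightarrow> addr \<Rightarrow> bool" where
  "in_vlist s a \<longleftrightarrow> (\<lambda>x y. nnext s x = Some y)\<^sup>*\<^sup>* (vhead s) a"

end

theory Submission
  imports Defs
begin

text \<open>Every node reachable from VHead, or from an address held in some process's local
  state, has already been allocated.  The only step that writes a nextv pointer is the
  allocation of a fresh node, so the version list, being made of allocated nodes, never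
  sees that write; and the only step that moves VHead is a successful CAS, which installs
  a node whose nextv is the old head, so the old list stays a suffix of the new one.\<close>

definition vnext :: "('p, 'v) st \<Rightarrow> addr \<Rightarrow> addr \<Rightarrow> bool" where
  "vnext s x y \<longleftrightarrow> nnext s x = Some y"

lemma in_vlist_iff_vnext: "in_vlist s a \<longleftrightarrow> (vnext s)\<^sup>*\<^sup>* (vhead s) a"
  unfolding in_vlist_def vnext_def[abs_def] ..

lemma rtranclp_cong_reachable:
  assumes reach: "\<And>y. r\<^sup>*\<^sup>* x y \<Longrightarrow> y \<in> A"
    and agree: "\<And>y z. y \<in> A \<Longrightarrow> r' y z \<longleftrightarrow> r y z"
  shows "r'\<^sup>*\<^sup>* x y \<longleftrightarrow> r\<^sup>*\<^sup>* x y"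
proof
  show "r\<^sup>*\<^sup>* x y" if "r'\<^sup>*\<^sup>* x y"
    using that
  proof (induction rule: rtranclp_induct)
    case (step y z)
    then show ?case using reach agree by (meson rtranclp.rtrancl_into_rtrancl)
  qed simp
  show "r'\<^sup>*\<^sup>* x y" if "r\<^sup>*\<^sup>* x y"
    using that
  proof (induction rule: rtranclp_induct)
    case (step y z)
    then show ?case using reach agree by (meson rtranclp.rtrancl_into_rtrancl)
  qed simp
qed

definition reach_used :: "('p, 'v) st \<Rightarrow> addr \<Rightarrow> bool" where
  "reach_used s x \<longleftrightarrow> (\<forall>y. (vnext s)\<^sup>*\<^sup>* x y \<longrightarrow> y \<in> used s)"

lemma reach_used_used: "reach_used s x \<Longrightarrow> x \<in> used s"
  unfolding reach_used_def by blast

lemma reach_used_next: "reach_used s x \<Longrightarrow> nnext s x = Some y \<Longrightarrow> reach_used s y"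
  unfolding reach_used_def vnext_def by (meson converse_rtranclp_into_rtranclp)

lemma reach_used_intro:
  assumes "x \<in> used s" and "\<And>y. nnext s x = Some y \<Longrightarrow> reach_used s y"
  shows "reach_used s x"
  unfolding reach_used_def
proof (intro allI impI)
  fix z
  assume "(vnext s)\<^sup>*\<^sup>* x z"
  then show "z \<in> used s"
    by (cases rule: converse_rtranclpE) (use assms in \<open>auto simp: vnext_def reach_used_def\<close>)
qed

fun pc_addrs :: "'v lpc \<Rightarrow> addr set" where
  "pc_addrs (IT_read n k) = {n}"
| "pc_addrs (IT_readc n k) = {n}"
| "pc_addrs (IT_cas n c k) = {n}"
| "pc_addrs (RS_loop t n) = {n}"
| "pc_addrs (RS_next t n) = {n}"
| "pc_addrs (RS_ret n) = {n}"
| "pc_addrs (VR_ret n) = {n}"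
| "pc_addrs (VC_check h ov nv) = {h}"
| "pc_addrs (VC_alloc h nv) = {h}"
| "pc_addrs (VC_cas h m) = {h, m}"
| "pc_addrs (VC_del m) = {m}"
| "pc_addrs _ = {}"

lemma pc_addrs_kont_next: "pc_addrs (kont_next n k) \<subseteq> {n}"
  by (cases k) auto

lemma kont_next_neq_VC_cas [simp]: "kont_next n k \<noteq> VC_cas h m"
  by (cases k) auto

lemma pstep_used_mono: "pstep p s s' \<Longrightarrow> used s \<subseteq> used s'"
  by (induction rule: pstep.induct) (auto simp: setpc_def)

lemma pstep_nnext_used: "pstep p s s' \<Longrightarrow> y \<in> used s \<Longrightarrow> nnext s' y = nnext s y"
  by (induction rule: pstep.induct) (auto simp: setpc_def)

lemma pstep_pcs_other: "pstep p s s' \<Longrightarrow> q \<noteq> p \<Longrightarrow> pcs s' q = pcs s q"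
  by (induction rule: pstep.induct) (auto simp: setpc_def)

lemma pstep_vhead: "pstep p s s' \<Longrightarrow> vhead s' = vhead s \<or> pcs s p = VC_cas (vhead s) (vhead s')"
  by (induction rule: pstep.induct) (auto simp: setpc_def)

lemma pstep_VC_cas_nnext: "pstep p s s' \<Longrightarrow> pcs s' p = VC_cas h m \<Longrightarrow> nnext s' m = Some h"
  by (induction rule: pstep.induct) (auto simp: setpc_def split: if_splits)

text \<open>The last disjunct is the node allocated by vCAS, whose nextv is the head it read.\<close>
lemma pstep_pc_addrs:
  assumes "pstep p s s'" and "n \<in> pc_addrs (pcs s' p)"
  shows "n \<in> pc_addrs (pcs s p) \<or> n = vhead s \<or> (\<exists>x\<in>pc_addrs (pcs s p). nnext s x = Some n)
    \<or> (\<exists>h\<in>pc_addrs (pcs s p). n \<in> used s' \<and> nnext s' n = Some h)"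
  using assms
  by (induction rule: pstep.induct)
     (use pc_addrs_kont_next in \<open>fastforce simp: setpc_def split: if_splits\<close>)+

lemma pstep_vnext_reach:
  assumes "pstep p s s'" and "reach_used s x"
  shows "(vnext s')\<^sup>*\<^sup>* x y \<longleftrightarrow> (vnext s)\<^sup>*\<^sup>* x y"
proof (rule rtranclp_cong_reachable[where A = "used s"])
  show "y \<in> used s" if "(vnext s)\<^sup>*\<^sup>* x y" for y
    using assms(2) that unfolding reach_used_def by blast
  show "vnext s' y z \<longleftrightarrow> vnext s y z" if "y \<in> used s" for y z
    using pstep_nnext_used[OF assms(1) that] by (simp add: vnext_def)
qed

lemma pstep_reach_used:
  assumes "pstep p s s'" and "reach_used s x"
  shows "reach_used s' x"
  unfolding reach_used_def
proof (intro allI impI)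
  fix y
  assume "(vnext s')\<^sup>*\<^sup>* x y"
  then have "y \<in> used s"
    using assms(2) pstep_vnext_reach[OF assms] unfolding reach_used_def by simp
  then show "y \<in> used s'" using pstep_used_mono[OF assms(1)] by blast
qed

definition vlist_inv :: "('p, 'v) st \<Rightarrow> bool" where
  "vlist_inv s \<longleftrightarrow> reach_used s (vhead s)
     \<and> (\<forall>q. \<forall>n\<in>pc_addrs (pcs s q). reach_used s n)
     \<and> (\<forall>q h m. pcs s q = VC_cas h m \<longrightarrow> nnext s m = Some h)"

lemma vlist_inv_init:
  assumes "init_state s"
  shows "vlist_inv s"
proof -
  have "reach_used s (vhead s)"
    by (rule reach_used_intro) (use assms in \<open>auto simp: init_state_def\<close>)
  moreover have "pc_addrs (pcs s q) = {} \<and> (\<forall>h m. pcs s q \<noteq> VC_cas h m)" for q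
  proof -
    have "pcs s q = Idle \<or> pcs s q = TS_read \<or> (\<exists>t. pcs s q = TS_cas t)"
      using assms by (simp add: init_state_def)
    then show ?thesis by (elim disjE exE) simp_all
  qed
  ultimately show ?thesis unfolding vlist_inv_def by simp
qed

lemma vlist_inv_pstep:
  assumes step: "pstep p s s'" and inv: "vlist_inv s"
  shows "vlist_inv s'"
proof -
  have held: "reach_used s n" if "n \<in> pc_addrs (pcs s q)" for q n
    using inv that unfolding vlist_inv_def by blast
  have frame: "reach_used s' x" if "reach_used s x" for x
    using pstep_reach_used[OF step that] .
  have head: "reach_used s' (vhead s')"
    using pstep_vhead[OF step] held[of _ p] inv frame unfolding vlist_inv_def by fastforce
  have link: "nnext s' m = Some h" if "pcs s' q = VC_cas h m" for q h m
  proof (cases "q = p")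
    case True
    then show ?thesis using pstep_VC_cas_nnext[OF step] that by simp
  next
    case False
    then have "pcs s q = VC_cas h m" using pstep_pcs_other[OF step] that by simp
    moreover have "m \<in> used s" using held[of m q] calculation reach_used_used by simp
    ultimately show ?thesis using inv pstep_nnext_used[OF step] unfolding vlist_inv_def by simp
  qed
  have pcs: "reach_used s' n" if "n \<in> pc_addrs (pcs s' q)" for q n
  proof (cases "q = p")
    case True
    with pstep_pc_addrs[OF step] that consider
        "n \<in> pc_addrs (pcs s p)" | "n = vhead s"
      | x where "x \<in> pc_addrs (pcs s p)" "nnext s x = Some n"
      | h where "h \<in> pc_addrs (pcs s p)" "n \<in> used s'" "nnext s' n = Some h"
      by blast
    then show ?thesis
    proof cases
      case 3
      then show ?thesis using held frame reach_used_next by blast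
    next
      case 4
      then show ?thesis using held frame by (auto intro: reach_used_intro)
    qed (use held frame inv in \<open>auto simp: vlist_inv_def\<close>)
  next
    case False
    then show ?thesis using pstep_pcs_other[OF step] that held frame by simp
  qed
  show ?thesis using head link pcs unfolding vlist_inv_def by blast
qed

lemma vlist_inv_steps: "step\<^sup>*\<^sup>* s s' \<Longrightarrow> vlist_inv s \<Longrightarrow> vlist_inv s'"
  by (induction rule: rtranclp_induct) (auto simp: step_def intro: vlist_inv_pstep)

lemma in_vlist_pstep:
  assumes step: "pstep p s s'" and inv: "vlist_inv s" and a: "in_vlist s a"
  shows "in_vlist s' a"
proof -
  have old_head: "reach_used s (vhead s)" using inv unfolding vlist_inv_def by blast
  have "(vnext s')\<^sup>*\<^sup>* (vhead s) a"
    using a pstep_vnext_reach[OF step old_head] by (simp add: in_vlist_iff_vnext)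
  moreover have "(vnext s')\<^sup>*\<^sup>* (vhead s') (vhead s)"
    using pstep_vhead[OF step]
  proof
    assume cas: "pcs s p = VC_cas (vhead s) (vhead s')"
    then have "reach_used s (vhead s')"
      using inv unfolding vlist_inv_def by (metis insertCI pc_addrs.simps(10))
    then have "nnext s' (vhead s') = nnext s (vhead s')"
      using pstep_nnext_used[OF step] reach_used_used by blast
    also have "\<dots> = Some (vhead s)"
      using cas inv unfolding vlist_inv_def by blast
    finally show ?thesis by (simp add: vnext_def r_into_rtranclp)
  qed simp
  ultimately show ?thesis by (simp add: in_vlist_iff_vnext rtranclp_trans)
qed

lemma in_vlist_steps: "step\<^sup>*\<^sup>* s s' \<Longrightarrow> vlist_inv s \<Longrightarrow> in_vlist s a \<Longrightarrow> in_vlist s' a"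
proof (induction rule: rtranclp_induct)
  case (step s' s'')
  obtain p where "pstep p s' s''" using step.hyps(2) by (auto simp: step_def)
  moreover have "vlist_inv s'" using vlist_inv_steps step.hyps(1) step.prems(1) .
  ultimately show ?case using step.IH[OF step.prems] by (rule in_vlist_pstep)
qed

theorem lemmaA1:
  fixes s0 s s' :: "('p, 'v) st" and a :: addr
  assumes "init_state s0"
    and "step\<^sup>*\<^sup>* s0 s"
    and "step\<^sup>*\<^sup>* s s'"
    and "in_vlist s a"
  shows "in_vlist s' a"
proof -
  have "vlist_inv s" using vlist_inv_steps[OF assms(2) vlist_inv_init[OF assms(1)]] .
  then show ?thesis using assms(3,4) in_vlist_steps by blast
qed

end
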